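(* Let $0\le\eta_1\le\eta_2\le1$ and $T\ge0$, and assume that $(D_tP(t,T,\eta_i))_{0\le t\le T}$ is a $\mathbb{Q}$-martingale for $i=1,2$. Then for all $t\in[0,T]$, $$\mathbb{Q}\big(P(t,T,\eta_1)\le P(t,T,\eta_2)\big)=1.$$
   Context: Let $(\Omega,\mathcal{F},(\mathcal{F}_t)_{t\ge0},\mathbb{Q})$ be a filtered probability space. $L=(L_t)$ is an adapted, càdlàg, non-decreasing pure-jump process with values in $[0,1]$ (the loss/quality process). The discount factor is $D_t:=\exp(-\int_0^tr_sds)$ for a progressively measurable, locally integrable real short-rate process $(r_s)$. Bond prices are $P(t,T,\eta):=1_{\{L_t\le\eta\}}\exp\big(-\int_t^Tf(t,u,\eta)du\big)$, $0\le t\le T$, $\eta\in[0,1]$, for a real-valued forward rate field $f$ (so that $P(T,T,\eta)=1_{\{L_T\le\eta\}}$). *)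

theory Defs
  imports "HOL-Probability.Probability"
begin

text \<open>A (continuous-time, index set [0,oo)) filtration on the probability space M.
  Each F t is a sub-sigma-algebra of M (sigma-finite restriction, needed for conditional
  expectations) and the family is increasing.\<close>
definition filtration :: "'a measure \<Rightarrow> (real \<Rightarrow> 'a measure) \<Rightarrow> bool" where
  "filtration M F \<longleftrightarrow>
     (\<forall>t\<ge>0. sigma_finite_subalgebra M (F t)) \<and>
     (\<forall>s t. 0 \<le> s \<longrightarrow> s \<le> t \<longrightarrow> sets (F s) \<subseteq> sets (F t))"

definition adapted :: "(real \<Rightarrow> 'a measure) \<Rightarrow> (real \<Rightarrow> 'a \<Rightarrow> real) \<Rightarrow> bool" where
  "adapted F X \<longleftrightarrow> (\<forall>t\<ge>0. X t \<in> borel_measurable (F t))"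

definition progressive :: "(real \<Rightarrow> 'a measure) \<Rightarrow> (real \<Rightarrow> 'a \<Rightarrow> real) \<Rightarrow> bool" where
  "progressive F X \<longleftrightarrow> (\<forall>t\<ge>0.
     (\<lambda>(s, \<omega>). X s \<omega>) \<in> borel_measurable (restrict_space lborel {0..t} \<Otimes>\<^sub>M F t))"

definition cadlag :: "(real \<Rightarrow> 'a \<Rightarrow> real) \<Rightarrow> 'a set \<Rightarrow> bool" where
  "cadlag X \<Omega> \<longleftrightarrow> (\<forall>\<omega>\<in>\<Omega>.
     (\<forall>t\<ge>0. continuous (at_right t) (\<lambda>s. X s \<omega>)) \<and>
     (\<forall>t>0. \<exists>l. ((\<lambda>s. X s \<omega>) \<longlongrightarrow> l) (at_left t)))"

definition pure_jump :: "(real \<Rightarrow> 'a \<Rightarrow> real) \<Rightarrow> 'a set \<Rightarrow> bool" where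
  "pure_jump X \<Omega> \<longleftrightarrow> (\<forall>\<omega>\<in>\<Omega>. \<forall>t\<ge>0.
     ((\<lambda>s. X s \<omega> - Lim (at_left s) (\<lambda>u. X u \<omega>)) has_sum (X t \<omega> - X 0 \<omega>)) {0<..t})"

definition locally_integrable :: "(real \<Rightarrow> 'a \<Rightarrow> real) \<Rightarrow> 'a set \<Rightarrow> bool" where
  "locally_integrable X \<Omega> \<longleftrightarrow>
     (\<forall>\<omega>\<in>\<Omega>. \<forall>t\<ge>0. set_integrable lborel {0..t} (\<lambda>s. X s \<omega>))"

definition martingale_on :: "'a measure \<Rightarrow> (real \<Rightarrow> 'a measure) \<Rightarrow> real \<Rightarrow> (real \<Rightarrow> 'a \<Rightarrow> real) \<Rightarrow> bool" where
  "martingale_on M F T X \<longleftrightarrow>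
     (\<forall>t\<in>{0..T}. X t \<in> borel_measurable (F t) \<and> integrable M (X t)) \<and>
     (\<forall>s t. 0 \<le> s \<longrightarrow> s \<le> t \<longrightarrow> t \<le> T \<longrightarrow>
        (AE \<omega> in M. real_cond_exp M (F s) (X t) \<omega> = X s \<omega>))"

definition discount :: "(real \<Rightarrow> 'a \<Rightarrow> real) \<Rightarrow> real \<Rightarrow> 'a \<Rightarrow> real" where
  "discount r t \<omega> = exp (- (LBINT s:{0..t}. r s \<omega>))"

definition bond_price :: "(real \<Rightarrow> 'a \<Rightarrow> real) \<Rightarrow> (real \<Rightarrow> real \<Rightarrow> real \<Rightarrow> 'a \<Rightarrow> real)
    \<Rightarrow> real \<Rightarrow> real \<Rightarrow> real \<Rightarrow> 'a \<Rightarrow> real" where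
  "bond_price L f t T \<eta> \<omega> =
     (if L t \<omega> \<le> \<eta> then 1 else 0) * exp (- (LBINT u:{t..T}. f t u \<eta> \<omega>))"

end

theory Submission
  imports Defs
begin

text \<open>At maturity every bond pays the indicator of the event that the loss has not exceeded its
  quality level, and this indicator is monotone in the level. Discounted prices are martingales,
  so each price is the conditional expectation of its discounted payoff; conditional expectation
  preserves order, and the discount factor is positive, hence cancels.\<close>

lemma martingale_on_AE_mono:
  assumes "filtration M F" "martingale_on M F T X" "martingale_on M F T Y"
    and "AE \<omega> in M. X T \<omega> \<le> Y T \<omega>" and "t \<in> {0..T}"
  shows "AE \<omega> in M. X t \<omega> \<le> Y t \<omega>"
proof -
  have sub: "sigma_finite_subalgebra M (F t)"
    using assms(1,5) by (auto simp: filtration_def)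
  have T: "T \<in> {0..T}" using assms(5) by auto
  have "AE \<omega> in M. real_cond_exp M (F t) (X T) \<omega> \<le> real_cond_exp M (F t) (Y T) \<omega>"
    using sigma_finite_subalgebra.real_cond_exp_mono[OF sub assms(4)] assms(2,3) T
    by (auto simp: martingale_on_def)
  moreover have "AE \<omega> in M. real_cond_exp M (F t) (X T) \<omega> = X t \<omega>"
    and "AE \<omega> in M. real_cond_exp M (F t) (Y T) \<omega> = Y t \<omega>"
    using assms(2,3,5) by (auto simp: martingale_on_def)
  ultimately show ?thesis by eventually_elim simp
qed

lemma set_lebesgue_integral_singleton: "(LBINT u:{a}. g u) = (0::real)"
  unfolding set_lebesgue_integral_def
  by (rule integral_eq_zero_AE) (use AE_lborel_singleton[of a] in \<open>auto elim!: AE_mp\<close>)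

lemma bond_price_at_maturity: "bond_price L f T T \<eta> \<omega> = (if L T \<omega> \<le> \<eta> then 1 else 0)"
  by (simp add: bond_price_def set_lebesgue_integral_singleton)

lemma bond_price_at_maturity_mono:
  "\<eta>1 \<le> \<eta>2 \<Longrightarrow> bond_price L f T T \<eta>1 \<omega> \<le> bond_price L f T T \<eta>2 \<omega>"
  by (simp add: bond_price_at_maturity)

lemma discount_pos: "0 < discount r t \<omega>"
  by (simp add: discount_def)

theorem mainTheorem9:
  fixes M :: "'a measure" and F :: "real \<Rightarrow> 'a measure"
    and L r :: "real \<Rightarrow> 'a \<Rightarrow> real"
    and f :: "real \<Rightarrow> real \<Rightarrow> real \<Rightarrow> 'a \<Rightarrow> real"
    and \<eta>1 \<eta>2 T :: real
  assumes "prob_space M"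
    and "filtration M F"
    and "adapted F L"
    and "cadlag L (space M)"
    and "\<forall>\<omega>\<in>space M. mono_on {0..} (\<lambda>t. L t \<omega>)"
    and "pure_jump L (space M)"
    and "\<forall>\<omega>\<in>space M. \<forall>t\<ge>0. L t \<omega> \<in> {0..1}"
    and "progressive F r"
    and "locally_integrable r (space M)"
    and "0 \<le> \<eta>1" and "\<eta>1 \<le> \<eta>2" and "\<eta>2 \<le> 1" and "0 \<le> T"
    and "martingale_on M F T (\<lambda>t \<omega>. discount r t \<omega> * bond_price L f t T \<eta>1 \<omega>)"
    and "martingale_on M F T (\<lambda>t \<omega>. discount r t \<omega> * bond_price L f t T \<eta>2 \<omega>)"
  shows "\<forall>t\<in>{0..T}. AE \<omega> in M. bond_price L f t T \<eta>1 \<omega> \<le> bond_price L f t T \<eta>2 \<omega>"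
proof
  fix t assume t: "t \<in> {0..T}"
  have "AE \<omega> in M. discount r T \<omega> * bond_price L f T T \<eta>1 \<omega>
                  \<le> discount r T \<omega> * bond_price L f T T \<eta>2 \<omega>"
    by (intro AE_I2 mult_left_mono bond_price_at_maturity_mono \<open>\<eta>1 \<le> \<eta>2\<close>
        less_imp_le discount_pos)
  from martingale_on_AE_mono[OF assms(2,14,15) this t]
  show "AE \<omega> in M. bond_price L f t T \<eta>1 \<omega> \<le> bond_price L f t T \<eta>2 \<omega>"
    by eventually_elim (simp add: discount_pos)
qed

end
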